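(* Consider the DOMT construction described in the context. Let $t_0$ be the time of the last rejection, and suppose a "mini-drought" of length $k$ occurs, i.e. no hypotheses are rejected for $t\in(t_0,t_0+k]$. Assume the base procedure's threshold during the drought is governed by a monotonically decreasing sequence $\gamma_k=\Theta\!\big(\tfrac{1}{k\log^2k}\big)$ indexed by the time elapsed since the last discovery, so that at $t=t_0+k$, $\lambda_t^{\mathrm{base}}=\Theta(\gamma_k)$. Then, at $t=t_0+k$, $$\frac{\mathbb{E}[\lambda_t^{\mathrm{DOMT}}]}{\lambda_t^{\mathrm{base}}}=1+\Omega\!\left(\frac{k\log^2k}{\sqrt{t_0+k}}\right),$$ and if the drought is macroscopic, $k=\Theta(t)$, this relative advantage diverges at rate $\Omega(\sqrt t\,\log^2t)$.
   Context: A base online testing procedure produces thresholds $\lambda_t^{\mathrm{base}}\in[0,1]$ from its own (virtual) history. DOMT with exploration coefficient $\kappa>0$ and level $\alpha\in(0,1)$: let $Z_t$ be i.i.d. $\mathrm{Uniform}[0,1]$ independent of everything else, $\xi_t=\frac{\kappa\alpha}{\sqrt t}Z_t$ (so $\xi_t\sim\mathrm{Uniform}[0,\kappa\alpha/\sqrt t]$), and the DOMT threshold is $\lambda_t^{\mathrm{DOMT}}=\lambda_t^{\mathrm{base}}+\xi_t$ (clipped at $1$), where the base procedure's state is updated only using its own unperturbed decisions $\mathbf{1}\{p_t\le\lambda_t^{\mathrm{base}}\}$. *)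

theory Defs
  imports "HOL-Probability.Probability" "HOL-Library.Landau_Symbols"
begin

definition domt_threshold :: "real \<Rightarrow> real \<Rightarrow> nat \<Rightarrow> real \<Rightarrow> real \<Rightarrow> real" where
  "domt_threshold \<kappa> \<alpha> t b z = min (b + \<kappa> * \<alpha> / sqrt (real t) * z) 1"

text \<open>Expectation of the DOMT threshold over Z ~ Uniform[0,1] (independent of the
  history, so the base threshold b is held fixed).\<close>
definition expected_domt :: "real \<Rightarrow> real \<Rightarrow> nat \<Rightarrow> real \<Rightarrow> real" where
  "expected_domt \<kappa> \<alpha> t b =
     (\<integral>z. domt_threshold \<kappa> \<alpha> t b z \<partial>(uniform_measure lborel {0..1::real}))"

end

theory Submission
  imports Defs "HOL-Real_Asymp.Real_Asymp"
begin

text \<open>As long as the perturbed threshold stays below the clipping level 1, the expected DOMT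
  threshold is the base threshold plus half the exploration width \<open>\<kappa>\<alpha>/\<surd>t\<close>.  During a drought
  the base threshold is of order \<open>1/(k log\<^sup>2 k)\<close>, so dividing by it turns that additive gain into
  the relative gain \<open>k log\<^sup>2 k/\<surd>t\<close>.  For a macroscopic drought \<open>k \<ge> c t\<close> one has
  \<open>log k \<ge> (log t)/2\<close>, which gives the rate \<open>\<surd>t log\<^sup>2 t\<close>.\<close>

lemma integral_uniform_measure_01_affine:
  fixes f :: "real \<Rightarrow> real"
  assumes f_meas: "f \<in> borel_measurable borel"
    and f_affine: "\<And>z. z \<in> {0..1} \<Longrightarrow> f z = b + a * z"
  shows "(\<integral>z. f z \<partial>uniform_measure lborel {0..1}) = b + a / 2"
proof -
  have uniform_density:
    "uniform_measure lborel {0..1::real} = density lborel (\<lambda>z. ennreal (indicator {0..1} z))"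
    unfolding uniform_measure_def by (intro density_cong) (auto simp: indicator_def)
  have "(\<integral>z. f z \<partial>uniform_measure lborel {0..1}) = (\<integral>z. indicator {0..1} z * f z \<partial>lborel)"
    unfolding uniform_density by (subst integral_density) (auto simp: f_meas)
  also have "\<dots> = (LINT z : {0..1} | lborel. b + a * z)"
    unfolding set_lebesgue_integral_def
    by (intro Bochner_Integration.integral_cong) (auto simp: indicator_def f_affine)
  also have "\<dots> = integral {0..1} (\<lambda>z. b + a * z)"
  proof (rule set_borel_integral_eq_integral)
    have "integrable lborel (\<lambda>z. (b + a * z) * indicator {0..1} z)"
      by (rule borel_integrable_atLeastAtMost) (auto intro!: continuous_intros)
    then show "set_integrable lborel {0..1} (\<lambda>z. b + a * z)"
      by (simp add: set_integrable_def mult.commute)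
  qed
  also have "\<dots> = b + a / 2"
  proof -
    have "((\<lambda>z. b + a * z) has_integral ((b * 1 + a * 1\<^sup>2 / 2) - (b * 0 + a * 0\<^sup>2 / 2))) {0..1}"
      by (rule fundamental_theorem_of_calculus)
        (auto simp flip: has_real_derivative_iff_has_vector_derivative intro!: derivative_eq_intros)
    then show ?thesis by (simp add: integral_unique)
  qed
  finally show ?thesis .
qed

lemma expected_domt_unclipped:
  assumes "0 \<le> \<kappa> * \<alpha>" and "b + \<kappa> * \<alpha> / sqrt (real t) \<le> 1"
  shows "expected_domt \<kappa> \<alpha> t b = b + \<kappa> * \<alpha> / sqrt (real t) / 2"
  unfolding expected_domt_def domt_threshold_def
proof (rule integral_uniform_measure_01_affine)
  fix z :: real assume "z \<in> {0..1}"
  moreover have "0 \<le> \<kappa> * \<alpha> / sqrt (real t)" using assms(1) by simp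
  ultimately have "\<kappa> * \<alpha> / sqrt (real t) * z \<le> \<kappa> * \<alpha> / sqrt (real t)"
    by (intro mult_left_le) auto
  then show "min (b + \<kappa> * \<alpha> / sqrt (real t) * z) 1 = b + \<kappa> * \<alpha> / sqrt (real t) * z"
    using assms(2) by simp
qed simp

lemma expected_domt_ratio_ge:
  assumes "0 < \<kappa> * \<alpha>" and "0 < t" and "0 < b" and "b \<le> B"
    and "b + \<kappa> * \<alpha> / sqrt (real t) \<le> 1"
  shows "1 + \<kappa> * \<alpha> / (2 * B * sqrt (real t)) \<le> expected_domt \<kappa> \<alpha> t b / b"
proof -
  have "expected_domt \<kappa> \<alpha> t b / b = 1 + \<kappa> * \<alpha> / (2 * b * sqrt (real t))"
    using assms by (simp add: expected_domt_unclipped field_simps)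
  moreover have "\<kappa> * \<alpha> / (2 * B * sqrt (real t)) \<le> \<kappa> * \<alpha> / (2 * b * sqrt (real t))"
    using assms by (intro divide_left_mono mult_right_mono) auto
  ultimately show ?thesis by linarith
qed

lemma sandwiched_by_bigtheta_bounds:
  fixes f :: "'b \<Rightarrow> 'a \<Rightarrow> real" and \<gamma> g :: "'a \<Rightarrow> real"
  assumes "\<gamma> \<in> \<Theta>[F](g)" and "\<forall>\<^sub>F k in F. 0 < g k"
    and "0 < c1" and "0 < c2" and "\<And>s k. 0 \<le> f s k"
    and "\<forall>\<^sub>F k in F. \<forall>s. c1 * \<gamma> k \<le> f s k \<and> f s k \<le> c2 * \<gamma> k"
  shows "\<exists>D>0. \<forall>\<^sub>F k in F. \<forall>s. 0 < f s k \<and> f s k \<le> D * g k"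
proof -
  obtain ch where "ch > 0" and upper: "\<forall>\<^sub>F k in F. norm (\<gamma> k) \<le> ch * norm (g k)"
    using bigthetaD1[OF assms(1)] by (elim landau_o.bigE)
  obtain cl where "cl > 0" and lower: "\<forall>\<^sub>F k in F. cl * norm (g k) \<le> norm (\<gamma> k)"
    using bigthetaD2[OF assms(1)] by (elim landau_omega.bigE)
  have "\<forall>\<^sub>F k in F. \<forall>s. 0 < f s k \<and> f s k \<le> (c2 * ch) * g k"
    using upper lower assms(2,6)
  proof eventually_elim
    case (elim k)
    show ?case
    proof
      fix s
      have "0 \<le> c2 * \<gamma> k" using elim(4) assms(5)[of s k] by (meson order.trans)
      then have "0 \<le> \<gamma> k" using assms(4) by (simp add: zero_le_mult_iff)
      then have "cl * g k \<le> \<gamma> k" and "\<gamma> k \<le> ch * g k"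
        using elim(1-3) by auto
      then have "0 < \<gamma> k" using \<open>cl > 0\<close> elim(3) by (meson mult_pos_pos order.strict_trans2)
      have "0 < f s k"
        using elim(4) assms(3) \<open>0 < \<gamma> k\<close> by (meson mult_pos_pos order.strict_trans2)
      moreover have "f s k \<le> (c2 * ch) * g k"
        using elim(4) assms(4) \<open>\<gamma> k \<le> ch * g k\<close>
        by (metis mult.assoc mult_left_mono order.trans less_imp_le)
      ultimately show "0 < f s k \<and> f s k \<le> (c2 * ch) * g k" ..
    qed
  qed
  then show ?thesis using \<open>ch > 0\<close> assms(4) by (intro exI[of _ "c2 * ch"]) auto
qed

lemma domt_drought_advantage:
  fixes \<gamma> :: "nat \<Rightarrow> real" and lam_base :: "nat \<Rightarrow> nat \<Rightarrow> real"
  assumes exploration_pos: "0 < \<kappa> * \<alpha>"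
    and base_nonneg: "\<And>t0 k. 0 \<le> lam_base t0 k"
    and gamma_Theta: "\<gamma> \<in> \<Theta>(\<lambda>k. 1 / (real k * (ln (real k))\<^sup>2))"
    and base_Theta: "\<exists>c1 c2. c1 > 0 \<and> c2 > 0 \<and>
        (\<forall>\<^sub>F k in sequentially. \<forall>t0. c1 * \<gamma> k \<le> lam_base t0 k \<and> lam_base t0 k \<le> c2 * \<gamma> k)"
  shows "\<exists>C>0. \<forall>\<^sub>F k in sequentially. \<forall>t0.
           1 + C * (real k * (ln (real k))\<^sup>2) / sqrt (real (t0 + k))
             \<le> expected_domt \<kappa> \<alpha> (t0 + k) (lam_base t0 k) / lam_base t0 k"
proof -
  define g :: "nat \<Rightarrow> real" where "g = (\<lambda>k. 1 / (real k * (ln (real k))\<^sup>2))"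
  have g_pos: "\<forall>\<^sub>F k in sequentially. 0 < g k"
    unfolding g_def by real_asymp
  obtain c1 c2 where "c1 > 0" "c2 > 0" and sandwich:
    "\<forall>\<^sub>F k in sequentially. \<forall>t0. c1 * \<gamma> k \<le> lam_base t0 k \<and> lam_base t0 k \<le> c2 * \<gamma> k"
    using base_Theta by blast
  then obtain D where "D > 0"
    and base_bounds: "\<forall>\<^sub>F k in sequentially. \<forall>t0. 0 < lam_base t0 k \<and> lam_base t0 k \<le> D * g k"
    using sandwiched_by_bigtheta_bounds[OF gamma_Theta[folded g_def] g_pos] base_nonneg
    by blast
  have "\<forall>\<^sub>F k in sequentially. D * g k + \<kappa> * \<alpha> / sqrt (real k) < 1"
    unfolding g_def by real_asymp
  then have unclipped: "\<forall>\<^sub>F k in sequentially. D * g k + \<kappa> * \<alpha> / sqrt (real k) \<le> 1"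
    by (rule eventually_mono) simp
  have "\<forall>\<^sub>F k in sequentially. \<forall>t0.
          1 + \<kappa> * \<alpha> / (2 * D) * (real k * (ln (real k))\<^sup>2) / sqrt (real (t0 + k))
            \<le> expected_domt \<kappa> \<alpha> (t0 + k) (lam_base t0 k) / lam_base t0 k"
    using base_bounds unclipped eventually_ge_at_top[of 2]
  proof eventually_elim
    case (elim k)
    show ?case
    proof
      fix t0
      have "\<kappa> * \<alpha> / sqrt (real (t0 + k)) \<le> \<kappa> * \<alpha> / sqrt (real k)"
        using exploration_pos elim(3) by (intro divide_left_mono) auto
      then have "lam_base t0 k + \<kappa> * \<alpha> / sqrt (real (t0 + k)) \<le> 1"
        using elim(1,2) by (meson order.trans add_mono order.refl)
      then have "1 + \<kappa> * \<alpha> / (2 * (D * g k) * sqrt (real (t0 + k)))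
                   \<le> expected_domt \<kappa> \<alpha> (t0 + k) (lam_base t0 k) / lam_base t0 k"
        using exploration_pos elim(1,3) by (intro expected_domt_ratio_ge) auto
      moreover have "\<kappa> * \<alpha> / (2 * (D * g k) * sqrt (real (t0 + k)))
          = \<kappa> * \<alpha> / (2 * D) * (real k * (ln (real k))\<^sup>2) / sqrt (real (t0 + k))"
        using elim(3) by (simp add: g_def)
      ultimately show "1 + \<kappa> * \<alpha> / (2 * D) * (real k * (ln (real k))\<^sup>2) / sqrt (real (t0 + k))
                   \<le> expected_domt \<kappa> \<alpha> (t0 + k) (lam_base t0 k) / lam_base t0 k"
        by simp
    qed
  qed
  then show ?thesis
    using exploration_pos \<open>D > 0\<close> by (intro exI[of _ "\<kappa> * \<alpha> / (2 * D)"]) auto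
qed

lemma macroscopic_drought_growth:
  fixes c t x :: real
  assumes "0 < c" and "1 \<le> t" and "1 \<le> c\<^sup>2 * t" and "c * t \<le> x"
  shows "c / 4 * sqrt t * (ln t)\<^sup>2 \<le> x * (ln x)\<^sup>2 / sqrt t"
proof -
  have "0 < c * t" using assms(1,2) by simp
  then have x_nonneg: "0 \<le> x" using assms(4) by linarith
  have "1 \<le> sqrt (c\<^sup>2 * t)" using assms(3) by simp
  then have "1 \<le> c * sqrt t"
    using assms(1) by (simp add: real_sqrt_mult)
  then have "sqrt t \<le> c * sqrt t * sqrt t"
    using assms(2) by simp
  also have "\<dots> = c * t" using assms(2) by (simp add: mult.assoc)
  finally have "ln (sqrt t) \<le> ln x"
    using assms(2,4) by (intro ln_mono) auto
  then have "ln t / 2 \<le> ln x"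
    using assms(2) by (simp add: ln_sqrt)
  then have "(ln t / 2)\<^sup>2 \<le> (ln x)\<^sup>2"
    using assms(2) by (intro power_mono) auto
  then have "c * t * (ln t / 2)\<^sup>2 \<le> x * (ln x)\<^sup>2"
    using assms x_nonneg by (intro mult_mono) auto
  moreover have "c / 4 * sqrt t * (ln t)\<^sup>2 = c * t * (ln t / 2)\<^sup>2 / sqrt t"
    using assms(2) real_sqrt_mult_self[of t] by (simp add: field_simps power2_eq_square)
  ultimately show ?thesis
    using assms(2) by (simp add: divide_right_mono)
qed
lemma drought_bound_macroscopic:
  fixes F :: "nat \<Rightarrow> nat \<Rightarrow> real"
  assumes "0 < C" and "0 < c"
    and drought: "\<forall>\<^sub>F k in sequentially. \<forall>t0.
        1 + C * (real k * (ln (real k))\<^sup>2) / sqrt (real (t0 + k)) \<le> F t0 k"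
  shows "\<exists>C'>0. \<exists>T. \<forall>t0 k. T \<le> t0 + k \<and> c * real (t0 + k) \<le> real k \<longrightarrow>
           1 + C' * sqrt (real (t0 + k)) * (ln (real (t0 + k)))\<^sup>2 \<le> F t0 k"
proof -
  obtain K where K: "\<And>k t0. K \<le> k \<Longrightarrow>
      1 + C * (real k * (ln (real k))\<^sup>2) / sqrt (real (t0 + k)) \<le> F t0 k"
    using drought unfolding eventually_sequentially by blast
  show ?thesis
  proof (intro exI[of _ "C * c / 4"] conjI exI[of _ "nat \<lceil>real K / c + 1 / c\<^sup>2 + 1\<rceil>"] allI impI)
    show "0 < C * c / 4" using assms(1,2) by simp
    fix t0 k
    assume "nat \<lceil>real K / c + 1 / c\<^sup>2 + 1\<rceil> \<le> t0 + k \<and> c * real (t0 + k) \<le> real k"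
    then have t_large: "real K / c + 1 / c\<^sup>2 + 1 \<le> real (t0 + k)"
      and macroscopic: "c * real (t0 + k) \<le> real k"
      by linarith+
    have "0 \<le> real K / c" and "0 \<le> 1 / c\<^sup>2" using assms(2) by simp_all
    then have "1 \<le> real (t0 + k)" and "real K / c \<le> real (t0 + k)" and "1 / c\<^sup>2 \<le> real (t0 + k)"
      using t_large by linarith+
    then have "1 \<le> c\<^sup>2 * real (t0 + k)" and "real K \<le> c * real (t0 + k)"
      using assms(2) by (simp_all add: field_simps)
    then have "K \<le> k" using macroscopic by linarith
    have "c / 4 * sqrt (real (t0 + k)) * (ln (real (t0 + k)))\<^sup>2
            \<le> real k * (ln (real k))\<^sup>2 / sqrt (real (t0 + k))"
      using assms(2) \<open>1 \<le> real (t0 + k)\<close> \<open>1 \<le> c\<^sup>2 * real (t0 + k)\<close> macroscopic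
      by (rule macroscopic_drought_growth)
    then have "C * (c / 4 * sqrt (real (t0 + k)) * (ln (real (t0 + k)))\<^sup>2)
            \<le> C * (real k * (ln (real k))\<^sup>2 / sqrt (real (t0 + k)))"
      using assms(1) by (intro mult_left_mono) auto
    then have "C * c / 4 * sqrt (real (t0 + k)) * (ln (real (t0 + k)))\<^sup>2
            \<le> C * (real k * (ln (real k))\<^sup>2) / sqrt (real (t0 + k))"
      by (simp only: mult.assoc times_divide_eq_right times_divide_eq_left)
    with K[OF \<open>K \<le> k\<close>, of t0]
    show "1 + C * c / 4 * sqrt (real (t0 + k)) * (ln (real (t0 + k)))\<^sup>2 \<le> F t0 k"
      by linarith
  qed
qed

theorem lemma1:
  fixes \<kappa> \<alpha> :: real
    and \<gamma> :: "nat \<Rightarrow> real"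
    and lam_base :: "nat \<Rightarrow> nat \<Rightarrow> real"
  assumes kappa_pos: "\<kappa> > 0"
    and alpha: "0 < \<alpha>" "\<alpha> < 1"
    and base_range: "\<And>t0 k. 0 \<le> lam_base t0 k \<and> lam_base t0 k \<le> 1"
    and gamma_dec: "decseq \<gamma>"
    and gamma_Theta: "\<gamma> \<in> \<Theta>(\<lambda>k. 1 / (real k * (ln (real k))\<^sup>2))"
    and base_Theta: "\<exists>c1 c2. c1 > 0 \<and> c2 > 0 \<and>
        (\<forall>\<^sub>F k in sequentially. \<forall>t0. c1 * \<gamma> k \<le> lam_base t0 k \<and> lam_base t0 k \<le> c2 * \<gamma> k)"
  shows "(\<exists>C > 0. \<forall>\<^sub>F k in sequentially. \<forall>t0.
            expected_domt \<kappa> \<alpha> (t0 + k) (lam_base t0 k) / lam_base t0 k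
              \<ge> 1 + C * (real k * (ln (real k))\<^sup>2) / sqrt (real (t0 + k)))
      \<and> (\<forall>c > 0. \<exists>C > 0. \<exists>T. \<forall>t0 k. T \<le> t0 + k \<and> c * real (t0 + k) \<le> real k \<longrightarrow>
            expected_domt \<kappa> \<alpha> (t0 + k) (lam_base t0 k) / lam_base t0 k
              \<ge> 1 + C * sqrt (real (t0 + k)) * (ln (real (t0 + k)))\<^sup>2)"
proof -
  have "0 < \<kappa> * \<alpha>" using kappa_pos alpha(1) by simp
  moreover have "\<And>t0 k. 0 \<le> lam_base t0 k" using base_range by simp
  ultimately obtain C where "C > 0" and drought: "\<forall>\<^sub>F k in sequentially. \<forall>t0.
      1 + C * (real k * (ln (real k))\<^sup>2) / sqrt (real (t0 + k))
        \<le> expected_domt \<kappa> \<alpha> (t0 + k) (lam_base t0 k) / lam_base t0 k"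
    using domt_drought_advantage[OF _ _ gamma_Theta base_Theta] by blast
  then show ?thesis
    using drought_bound_macroscopic[OF \<open>C > 0\<close> _ drought] by blast
qed

end
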